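(* Let $\Gamma_2$ be the mapping class group of a closed orientable surface of genus $2$, and let $U(2)\subset Sp(4,\mathbb R)$ be a maximal compact subgroup. Then the natural map $$Hom(\Gamma_2,U(2))\to Hom(\Gamma_2,Sp(4,\mathbb R))$$ induced by the inclusion is not surjective on path-components.
   Context: For a finitely generated group $\pi$ and a Lie group $G$, $Hom(\pi,G)$ is the space of homomorphisms $\pi\to G$, topologized as a subspace of $G^k$ via evaluation on a finite generating set; a map of spaces is surjective on path-components if every path-component of the target contains a point of the image. *)

theory Defs
  imports "HOL-Analysis.Analysis"
begin

text \<open>Standard symplectic form on R^4 (indices 0,1,2,3 of the numeral type 4):
  J = [[0, I],[-I, 0]].\<close>
definition J4 :: "real^4^4" where
  "J4 = (\<chi> i j. if (i = 0 \<and> j = 2) \<or> (i = 1 \<and> j = 3) then 1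
                 else if (i = 2 \<and> j = 0) \<or> (i = 3 \<and> j = 1) then -1 else 0)"

definition Sp4 :: "(real^4^4) set" where
  "Sp4 = {M. transpose M ** J4 ** M = J4}"

definition U2 :: "(real^4^4) set" where
  "U2 = {M \<in> Sp4. transpose M ** M = mat 1}"

text \<open>Evaluation of a positive word in the generators a_1..a_5 (indices 0..4).\<close>
definition wrd :: "(real^4^4)^5 \<Rightarrow> 5 list \<Rightarrow> real^4^4" where
  "wrd \<rho> xs = foldr (\<lambda>i M. (\<rho> $ i) ** M) xs (mat 1)"

text \<open>Birman--Hilden presentation of the genus 2 mapping class group:
  generators a_1,...,a_5 (Dehn twists along a chain of curves), relations:
  far commutation, braid relations, (a1 a2 a3 a4 a5)^6 = 1,
  (a1 a2 a3 a4 a5^2 a4 a3 a2 a1)^2 = 1, and a1 commutes with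
  a1 a2 a3 a4 a5^2 a4 a3 a2 a1.\<close>
definition gamma2_rel :: "(real^4^4)^5 \<Rightarrow> bool" where
  "gamma2_rel \<rho> \<longleftrightarrow>
     (\<forall>(i,j)\<in>{(0::5,2::5),(0,3),(0,4),(1,3),(1,4),(2,4)}. wrd \<rho> [i,j] = wrd \<rho> [j,i]) \<and>
     (\<forall>(i,j)\<in>{(0::5,1::5),(1,2),(2,3),(3,4)}. wrd \<rho> [i,j,i] = wrd \<rho> [j,i,j]) \<and>
     wrd \<rho> (concat (replicate 6 [0,1,2,3,4])) = mat 1 \<and>
     wrd \<rho> (concat (replicate 2 [0,1,2,3,4,4,3,2,1,0])) = mat 1 \<and>
     wrd \<rho> (0 # [0,1,2,3,4,4,3,2,1,0]) = wrd \<rho> ([0,1,2,3,4,4,3,2,1,0] @ [0])"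

text \<open>Hom(\<Gamma>_2, G) as a subspace of G^5 via evaluation on the generators.\<close>
definition HomGamma2 :: "(real^4^4) set \<Rightarrow> ((real^4^4)^5) set" where
  "HomGamma2 G = {\<rho>. (\<forall>i. \<rho> $ i \<in> G) \<and> gamma2_rel \<rho>}"

end

(*
  The Dehn twists a_1, ..., a_5 act on H_1 of the genus 2 surface by symplectic
  transvections, and in this representation c = a_1 a_2 a_3 a_4 a_5 has order 6, so c^2 is
  not the identity.

  A matrix in U(2) commutes with J4, i.e. it is a complex-linear map of C^2, so a unitary
  representation is a representation in GL_2(C). There the chain relations force all
  generators to coincide: a braid relation between two commuting invertible elements makes
  them equal, and the centralizer of a non-scalar 2x2 matrix is commutative. With a single
  generator a, the relations say a^30 = a^20 = 1, hence c^2 = a^10 = 1.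

  In every representation Q = c^2 satisfies Q^3 = 1, so det (Q^2 + Q + 1) vanishes unless
  Q = 1, where it equals 3^4 = 81. This continuous function with values in {0, 81} is
  constant on path components and separates the symplectic representation from all
  unitary ones.
*)

theory Submission
  imports Defs
begin

lemma continuous_on_matrix_mult [continuous_intros]:
  fixes f :: "'a::topological_space \<Rightarrow> 'b::real_normed_algebra_1^'n^'m"
    and g :: "'a \<Rightarrow> 'b^'p^'n"
  shows "continuous_on S f \<Longrightarrow> continuous_on S g \<Longrightarrow> continuous_on S (\<lambda>x. f x ** g x)"
  unfolding matrix_matrix_mult_def by (intro continuous_intros)

lemma continuous_on_det [continuous_intros]:
  fixes f :: "'a::topological_space \<Rightarrow> 'b::{real_normed_algebra_1,comm_ring_1}^'n^'n"
  shows "continuous_on S f \<Longrightarrow> continuous_on S (\<lambda>x. det (f x))"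
  unfolding det_def by (intro continuous_intros)

lemma path_component_finite_range_eq:
  fixes f :: "'a::topological_space \<Rightarrow> 'b::real_normed_algebra_1"
  assumes f: "continuous_on S f" "finite (f ` S)" and xy: "path_component S x y"
  shows "f x = f y"
proof -
  let ?C = "path_component_set S x"
  have "?C \<subseteq> S"
    by (rule path_component_subset)
  have "f constant_on ?C"
  proof (rule continuous_finite_range_constant)
    show "connected ?C"
      by (simp add: path_connected_imp_connected)
    show "continuous_on ?C f"
      using f(1) \<open>?C \<subseteq> S\<close> by (rule continuous_on_subset)
    show "finite (f ` ?C)"
      using f(2) \<open>?C \<subseteq> S\<close> by (meson finite_subset image_mono)
  qed
  moreover have "x \<in> ?C" "y \<in> ?C"
    using xy by (auto intro: path_component_refl path_component_mem)
  ultimately show ?thesis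
    by (auto simp: constant_on_def)
qed

lemma det_mat: "det (mat c :: 'a::comm_ring_1^'n^'n) = c ^ CARD('n)"
  by (simp add: det_diagonal mat_def)

lemma mat_eq_1_if_cube_eq_1:
  fixes Q :: "'a::field^'n^'n"
  assumes cube: "Q ** Q ** Q = mat 1" and det: "det (Q ** Q + Q + mat 1) \<noteq> 0"
  shows "Q = mat 1"
proof -
  let ?F = "Q ** Q + Q + mat 1"
  have QF: "Q ** ?F = ?F"
    using cube by (simp add: matrix_add_ldistrib matrix_mul_assoc add_ac)
  obtain F' where F': "?F ** F' = mat 1"
    using det invertible_det_nz invertible_def by blast
  have "Q = Q ** ?F ** F'"
    by (simp add: F' flip: matrix_mul_assoc)
  also have "\<dots> = mat 1"
    by (simp add: QF F')
  finally show ?thesis .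
qed

lemma eq_if_braid_commute:
  fixes X Y :: "'a::semiring_1^'n^'n"
  assumes "invertible X" "invertible Y"
    and braid: "X ** Y ** X = Y ** X ** Y" and comm: "X ** Y = Y ** X"
  shows "X = Y"
proof -
  obtain X' Y' where X': "X' ** X = mat 1" and Y': "Y ** Y' = mat 1"
    using assms(1,2) invertible_def by blast
  have "X ** (X ** Y) = X ** (Y ** Y)"
    using braid comm by (metis matrix_mul_assoc)
  then have "X ** Y = Y ** Y"
    by (metis X' matrix_mul_assoc matrix_mul_lid)
  then show ?thesis
    by (metis Y' matrix_mul_assoc matrix_mul_rid)
qed

definition proportional :: "'a::times \<times> 'a \<times> 'a \<Rightarrow> 'a \<times> 'a \<times> 'a \<Rightarrow> bool" where
  "proportional u v \<longleftrightarrow> (case (u, v) of ((a, b, c), (x, y, z)) \<Rightarrow>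
     a * y = b * x \<and> a * z = c * x \<and> b * z = c * y)"

lemma proportional_trans:
  fixes u v w :: "'a::field \<times> 'a \<times> 'a"
  assumes "proportional u v" "proportional u w" "u \<noteq> (0, 0, 0)"
  shows "proportional v w"
proof -
  obtain a b c x1 y1 z1 x2 y2 z2 where uvw: "u = (a, b, c)" "v = (x1, y1, z1)" "w = (x2, y2, z2)"
    by (metis prod_cases3)
  have h: "a * y1 = b * x1" "a * z1 = c * x1" "b * z1 = c * y1"
          "a * y2 = b * x2" "a * z2 = c * x2" "b * z2 = c * y2"
    using assms(1,2) by (simp_all add: proportional_def uvw)
  consider "a \<noteq> 0" | "b \<noteq> 0" | "c \<noteq> 0"
    using assms(3) uvw by blast
  then show ?thesis
  proof cases
    case 1
    have "a * (x1 * y2 - x2 * y1) = 0" "a * (x1 * z2 - x2 * z1) = 0"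
         "a * a * (y1 * z2 - y2 * z1) = 0"
      using h by algebra+
    with 1 show ?thesis by (simp add: proportional_def uvw)
  next
    case 2
    have "b * b * (x1 * y2 - x2 * y1) = 0" "b * b * (x1 * z2 - x2 * z1) = 0"
         "b * (y1 * z2 - y2 * z1) = 0"
      using h by algebra+
    with 2 show ?thesis by (simp add: proportional_def uvw)
  next
    case 3
    have "c * c * (x1 * y2 - x2 * y1) = 0" "c * (x1 * z2 - x2 * z1) = 0"
         "c * (y1 * z2 - y2 * z1) = 0"
      using h by algebra+
    with 3 show ?thesis by (simp add: proportional_def uvw)
  qed
qed

text \<open>These are coordinates of the traceless part of \<open>X\<close>; they vanish exactly on the
  scalar matrices, and the entries of \<open>X Y - Y X\<close> are the components of their cross product.\<close>

definition sl2_coords :: "'a::ab_group_add^2^2 \<Rightarrow> 'a \<times> 'a \<times> 'a" where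
  "sl2_coords X = (X$1$2, X$2$1, X$1$1 - X$2$2)"

lemma commute_2x2_iff:
  fixes X Y :: "'a::comm_ring_1^2^2"
  shows "X ** Y = Y ** X \<longleftrightarrow> proportional (sl2_coords X) (sl2_coords Y)"
  by (auto simp: vec_eq_iff forall_2 matrix_matrix_mult_def sum_2 proportional_def sl2_coords_def
      algebra_simps)

lemma commute_2x2_if_scalar:
  fixes X Y :: "'a::comm_ring_1^2^2"
  shows "sl2_coords X = (0, 0, 0) \<Longrightarrow> X ** Y = Y ** X"
  by (simp add: commute_2x2_iff proportional_def)

lemma commute_2x2_trans:
  fixes X Y Z :: "'a::field^2^2"
  assumes "X ** Y = Y ** X" "X ** Z = Z ** X" "sl2_coords X \<noteq> (0, 0, 0)"
  shows "Y ** Z = Z ** Y"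
  using assms proportional_trans by (metis commute_2x2_iff)

lemma exhaust_5: "(x::5) = 0 \<or> x = 1 \<or> x = 2 \<or> x = 3 \<or> x = 4"
proof (induct x)
  case (of_int z)
  then have "z = 0 \<or> z = 1 \<or> z = 2 \<or> z = 3 \<or> z = 4" by fastforce
  then show ?case by auto
qed

lemma braid_rep_2x2_constant:
  fixes A :: "5 \<Rightarrow> 'a::field^2^2"
  assumes inv: "\<And>i. invertible (A i)"
    and far: "\<And>i j. (i, j) \<in> {(0, 2), (0, 3), (0, 4), (1, 3), (1, 4), (2, 4)} \<Longrightarrow>
                A i ** A j = A j ** A i"
    and braid: "\<And>i j. (i, j) \<in> {(0, 1), (1, 2), (2, 3), (3, 4)} \<Longrightarrow>
                  A i ** A j ** A i = A j ** A i ** A j"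
  shows "A i = A 0"
proof -
  have eq: "A i = A j" if "(i, j) \<in> {(0, 1), (1, 2), (2, 3), (3, 4)}" "A i ** A j = A j ** A i"
    for i j
    using eq_if_braid_commute[OF inv inv braid[OF that(1)] that(2)] .
  have "A 0 = A 1 \<and> A 1 = A 2 \<and> A 2 = A 3 \<and> A 3 = A 4"
  proof (cases "sl2_coords (A 0) = (0, 0, 0)")
    case True
    note comm = commute_2x2_if_scalar[OF True]
    have "A 0 = A 1"
      using eq[of 0 1] comm by simp
    moreover have "A 1 = A 2"
      using eq[of 1 2] comm \<open>A 0 = A 1\<close> by simp
    moreover have "A 2 = A 3"
      using eq[of 2 3] comm \<open>A 0 = A 1\<close> \<open>A 1 = A 2\<close> by simp
    moreover have "A 3 = A 4"
      using eq[of 3 4] comm \<open>A 0 = A 1\<close> \<open>A 1 = A 2\<close> \<open>A 2 = A 3\<close> by simp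
    ultimately show ?thesis
      by simp
  next
    case A0: False
    show ?thesis
    proof (cases "sl2_coords (A 3) = (0, 0, 0)")
      case True
      note comm = commute_2x2_if_scalar[OF True]
      have "A 3 = A 4"
        using eq[of 3 4] comm by simp
      moreover have "A 2 = A 3"
        using eq[of 2 3] by (simp add: comm)
      moreover have "A 1 = A 2"
        using eq[of 1 2] \<open>A 2 = A 3\<close> by (simp add: comm)
      moreover have "A 0 = A 1"
        using eq[of 0 1] \<open>A 1 = A 2\<close> \<open>A 2 = A 3\<close> by (simp add: comm)
      ultimately show ?thesis
        by simp
    next
      case A3: False
      have "A 0 ** A 2 = A 2 ** A 0" "A 0 ** A 3 = A 3 ** A 0" "A 0 ** A 4 = A 4 ** A 0"
        and "A 1 ** A 3 = A 3 ** A 1"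
        using far[of 0 2] far[of 0 3] far[of 0 4] far[of 1 3] by simp_all
      note far_comm = this
      have "A 2 = A 3"
        using eq[of 2 3] commute_2x2_trans[OF far_comm(1,2) A0] by simp
      moreover have "A 3 = A 4"
        using eq[of 3 4] commute_2x2_trans[OF far_comm(2,3) A0] by simp
      moreover have "A 0 = A 1"
        using eq[of 0 1] commute_2x2_trans[OF far_comm(2,4)[symmetric] A3] by simp
      moreover have "A 1 = A 2"
        using eq[of 1 2] far_comm(4) \<open>A 2 = A 3\<close> by simp
      ultimately show ?thesis
        by simp
    qed
  qed
  then show ?thesis
    using exhaust_5[of i] by auto
qed

lemma wrd_Nil [simp]: "wrd \<rho> [] = mat 1"
  by (simp add: wrd_def)

lemma wrd_Cons [simp]: "wrd \<rho> (x # xs) = \<rho> $ x ** wrd \<rho> xs"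
  by (simp add: wrd_def)

lemma wrd_append: "wrd \<rho> (xs @ ys) = wrd \<rho> xs ** wrd \<rho> ys"
  by (induction xs) (simp_all add: matrix_mul_assoc)

lemma continuous_on_wrd [continuous_intros]:
  "continuous_on S f \<Longrightarrow> continuous_on S (\<lambda>x. wrd (f x) xs)"
  by (induction xs) (auto intro!: continuous_intros)

text \<open>\<open>sum_4\<close> and \<open>forall_4\<close> enumerate the indices as \<open>1, 2, 3, 4\<close>, whereas \<open>J4\<close> uses
  \<open>0, 1, 2, 3\<close>.\<close>

lemma four_eq_zero [simp]: "(4::4) = 0"
  by simp

definition complex_linear :: "real^4^4 \<Rightarrow> bool" where
  "complex_linear M \<longleftrightarrow> M ** J4 = J4 ** M"

lemma complex_linear_mult:
  "complex_linear M \<Longrightarrow> complex_linear N \<Longrightarrow> complex_linear (M ** N)"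
  unfolding complex_linear_def by (metis matrix_mul_assoc)

lemma complex_linear_blocks:
  assumes "complex_linear M"
  shows "M$2$0 = - M$0$2" "M$2$1 = - M$0$3" "M$2$2 = M$0$0" "M$2$3 = M$0$1"
    and "M$3$0 = - M$1$2" "M$3$1 = - M$1$3" "M$3$2 = M$1$0" "M$3$3 = M$1$1"
proof -
  have "(M ** J4)$i$j = (J4 ** M)$i$j" for i j
    using assms by (simp add: complex_linear_def)
  note entries = this[unfolded matrix_matrix_mult_def J4_def, simplified, unfolded sum_4, simplified]
  show "M$2$0 = - M$0$2" "M$2$1 = - M$0$3" "M$2$2 = M$0$0" "M$2$3 = M$0$1"
    and "M$3$0 = - M$1$2" "M$3$1 = - M$1$3" "M$3$2 = M$1$0" "M$3$3 = M$1$1"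
    using entries[of 0 0] entries[of 0 1] entries[of 0 2] entries[of 0 3]
      entries[of 1 0] entries[of 1 1] entries[of 1 2] entries[of 1 3] by simp_all
qed

text \<open>A matrix commuting with \<open>J4\<close> has the block form \<open>[[A, B], [-B, A]]\<close> and acts on
  \<open>R^4 = C^2\<close> as the complex matrix \<open>A + iB\<close>.\<close>

definition cmat :: "real^4^4 \<Rightarrow> complex^2^2" where
  "cmat M = vector [vector [Complex (M$0$0) (M$0$2), Complex (M$0$1) (M$0$3)],
                    vector [Complex (M$1$0) (M$1$2), Complex (M$1$1) (M$1$3)]]"

lemma cmat_mult:
  assumes "complex_linear N"
  shows "cmat (M ** N) = cmat M ** cmat N"
  using complex_linear_blocks[OF assms]
  by (simp add: cmat_def vec_eq_iff forall_2 matrix_matrix_mult_def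
      sum_2 sum_4 complex_eq_iff algebra_simps)

lemma cmat_one: "cmat (mat 1) = mat 1"
  by (simp add: cmat_def vec_eq_iff forall_2 mat_def complex_eq_iff)

lemma cmat_inj:
  assumes "complex_linear M" "complex_linear N" "cmat M = cmat N"
  shows "M = N"
proof -
  have "M$0$j = N$0$j \<and> M$1$j = N$1$j" for j
    using assms(3) exhaust_4[of j] by (auto simp: cmat_def vec_eq_iff forall_2 complex_eq_iff)
  then show ?thesis
    using complex_linear_blocks[OF assms(1)] complex_linear_blocks[OF assms(2)]
    by (simp add: vec_eq_iff forall_4)
qed

lemma U2D:
  assumes "M \<in> U2"
  shows "complex_linear M" "complex_linear (transpose M)"
    and "M ** transpose M = mat 1" "transpose M ** M = mat 1"
proof -
  have sp: "transpose M ** J4 ** M = J4" and orth: "transpose M ** M = mat 1"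
    using assms by (auto simp: U2_def Sp4_def)
  have orth': "M ** transpose M = mat 1"
    using orth matrix_left_right_inverse by blast
  have "M ** J4 = M ** (transpose M ** J4 ** M)"
    by (simp add: sp)
  also have "\<dots> = J4 ** M"
    by (simp add: matrix_mul_assoc orth')
  finally have MJ: "M ** J4 = J4 ** M" .
  have "transpose M ** J4 = transpose M ** J4 ** (M ** transpose M)"
    by (simp add: orth')
  also have "\<dots> = transpose M ** (M ** J4) ** transpose M"
    by (simp add: MJ matrix_mul_assoc)
  also have "\<dots> = J4 ** transpose M"
    by (simp add: matrix_mul_assoc orth)
  finally show "complex_linear M" "complex_linear (transpose M)"
    using MJ by (simp_all add: complex_linear_def)
  show "M ** transpose M = mat 1" "transpose M ** M = mat 1"
    by (fact orth', fact orth)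
qed

lemma U2_rep_constant:
  assumes "\<sigma> \<in> HomGamma2 U2"
  shows "\<sigma> $ i = \<sigma> $ 0"
proof -
  have U: "\<sigma> $ k \<in> U2" for k
    using assms by (simp add: HomGamma2_def)
  have rel: "gamma2_rel \<sigma>"
    using assms by (simp add: HomGamma2_def)
  note lin = U2D[OF U]
  have "cmat (\<sigma> $ i) = cmat (\<sigma> $ 0)"
  proof (rule braid_rep_2x2_constant)
    show "invertible (cmat (\<sigma> $ k))" for k
      unfolding invertible_def
      by (rule exI[of _ "cmat (transpose (\<sigma> $ k))"])
        (simp add: lin cmat_one flip: cmat_mult)
    show "cmat (\<sigma> $ k) ** cmat (\<sigma> $ l) = cmat (\<sigma> $ l) ** cmat (\<sigma> $ k)"
      if "(k, l) \<in> {(0, 2), (0, 3), (0, 4), (1, 3), (1, 4), (2, 4)}" for k l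
    proof -
      have "wrd \<sigma> [k, l] = wrd \<sigma> [l, k]"
        using rel that unfolding gamma2_rel_def by fast
      then show ?thesis
        by (simp add: lin flip: cmat_mult)
    qed
    show "cmat (\<sigma> $ k) ** cmat (\<sigma> $ l) ** cmat (\<sigma> $ k)
        = cmat (\<sigma> $ l) ** cmat (\<sigma> $ k) ** cmat (\<sigma> $ l)"
      if "(k, l) \<in> {(0, 1), (1, 2), (2, 3), (3, 4)}" for k l
    proof -
      have "wrd \<sigma> [k, l, k] = wrd \<sigma> [l, k, l]"
        using rel that unfolding gamma2_rel_def by fast
      then show ?thesis
        by (simp add: lin complex_linear_mult flip: cmat_mult matrix_mul_assoc)
    qed
  qed
  then show ?thesis
    using cmat_inj lin(1) by blast
qed

definition chain_sq :: "(real^4^4)^5 \<Rightarrow> real^4^4" where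
  "chain_sq \<rho> = wrd \<rho> (concat (replicate 2 [0, 1, 2, 3, 4]))"

definition chain_det :: "(real^4^4)^5 \<Rightarrow> real" where
  "chain_det \<rho> = det (chain_sq \<rho> ** chain_sq \<rho> + chain_sq \<rho> + mat 1)"

lemma chain_sq_cube: "gamma2_rel \<rho> \<Longrightarrow> chain_sq \<rho> ** chain_sq \<rho> ** chain_sq \<rho> = mat 1"
  unfolding gamma2_rel_def chain_sq_def
  by (simp add: numeral_eq_Suc wrd_append flip: matrix_mul_assoc)

lemma U2_rep_chain_sq:
  assumes "\<sigma> \<in> HomGamma2 U2"
  shows "chain_sq \<sigma> = mat 1"
proof -
  have rel: "gamma2_rel \<sigma>"
    using assms by (simp add: HomGamma2_def)
  define P where "P n = wrd \<sigma> (replicate n 0)" for n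
  have wrd_P: "wrd \<sigma> xs = P (length xs)" for xs
  proof (induction xs)
    case (Cons x xs)
    then show ?case
      using U2_rep_constant[OF assms, of x] by (simp add: P_def)
  qed (simp add: P_def)
  have P_add: "P (m + n) = P m ** P n" for m n
    by (simp add: P_def replicate_add wrd_append)
  have "P 30 = mat 1" "P 20 = mat 1"
    using rel unfolding gamma2_rel_def wrd_P by (simp_all add: length_concat sum_list_replicate)
  then have "P 10 = mat 1"
    using P_add[of 10 20] by simp
  then show ?thesis
    by (simp add: chain_sq_def wrd_P length_concat sum_list_replicate)
qed

lemma chain_det_cases: "gamma2_rel \<rho> \<Longrightarrow> chain_det \<rho> = 0 \<or> chain_sq \<rho> = mat 1"
  using mat_eq_1_if_cube_eq_1[OF chain_sq_cube] by (auto simp: chain_det_def)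

lemma chain_det_if_chain_sq_eq_1:
  assumes "chain_sq \<rho> = mat 1"
  shows "chain_det \<rho> = 81"
proof -
  have "mat 1 + mat 1 + mat 1 = (mat 3 :: real^4^4)"
    by (simp add: vec_eq_iff mat_def)
  then show ?thesis
    using assms by (simp add: chain_det_def det_mat)
qed

lemma continuous_on_chain_det: "continuous_on S chain_det"
  unfolding chain_det_def chain_sq_def by (intro continuous_intros)

definition mat4 :: "real list list \<Rightarrow> real^4^4" where
  "mat4 L = (\<chi> i j. L ! nat (Rep_bit0 i) ! nat (Rep_bit0 j))"

lemmas Rep_bit0_simps = bit0.Rep_numeral bit0.Rep_0 bit0.Rep_1

lemma mat4_mult:
  "mat4 A ** mat4 B = mat4 (map (\<lambda>i. map (\<lambda>j. \<Sum>k<4. A!i!k * B!k!j) [0..<4]) [0..<4])"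
  by (simp add: vec_eq_iff forall_4 mat4_def matrix_matrix_mult_def sum_4 Rep_bit0_simps
      eval_nat_numeral ac_simps)

lemma mat4_transpose: "transpose (mat4 A) = mat4 (map (\<lambda>i. map (\<lambda>j. A!j!i) [0..<4]) [0..<4])"
  by (simp add: vec_eq_iff forall_4 mat4_def transpose_def Rep_bit0_simps eval_nat_numeral)

lemma mat4_one: "mat 1 = mat4 [[1,0,0,0], [0,1,0,0], [0,0,1,0], [0,0,0,1]]"
  by (simp add: vec_eq_iff forall_4 mat4_def mat_def Rep_bit0_simps)

lemma J4_eq_mat4: "J4 = mat4 [[0,0,1,0], [0,0,0,1], [-1,0,0,0], [0,-1,0,0]]"
  by (simp add: vec_eq_iff forall_4 mat4_def J4_def Rep_bit0_simps)

text \<open>The transvections \<open>x \<mapsto> x + \<omega>(x, v) v\<close>, \<open>\<omega>(x, y) = x\<^sup>T J4 y\<close>, along the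
  homology classes \<open>v = e\<^sub>0, e\<^sub>2, e\<^sub>0 - e\<^sub>1, e\<^sub>3, e\<^sub>1\<close> of the chain curves.\<close>

definition symplectic_rep :: "(real^4^4)^5" where
  "symplectic_rep = (\<chi> i. mat4 ([
     [[1,0,-1,0], [0,1,0,0],  [0,0,1,0], [0,0,0,1]],
     [[1,0,0,0],  [0,1,0,0],  [1,0,1,0], [0,0,0,1]],
     [[1,0,-1,1], [0,1,1,-1], [0,0,1,0], [0,0,0,1]],
     [[1,0,0,0],  [0,1,0,0],  [0,0,1,0], [0,1,0,1]],
     [[1,0,0,0],  [0,1,0,-1], [0,0,1,0], [0,0,0,1]]] ! nat (Rep_bit1 i)))"

lemma symplectic_rep_nth:
  "symplectic_rep $ 0 = mat4 [[1,0,-1,0], [0,1,0,0],  [0,0,1,0], [0,0,0,1]]"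
  "symplectic_rep $ 1 = mat4 [[1,0,0,0],  [0,1,0,0],  [1,0,1,0], [0,0,0,1]]"
  "symplectic_rep $ 2 = mat4 [[1,0,-1,1], [0,1,1,-1], [0,0,1,0], [0,0,0,1]]"
  "symplectic_rep $ 3 = mat4 [[1,0,0,0],  [0,1,0,0],  [0,0,1,0], [0,1,0,1]]"
  "symplectic_rep $ 4 = mat4 [[1,0,0,0],  [0,1,0,-1], [0,0,1,0], [0,0,0,1]]"
  by (simp_all add: symplectic_rep_def bit1.Rep_numeral bit1.Rep_0 bit1.Rep_1)

lemmas symplectic_rep_simps = symplectic_rep_nth mat4_one mat4_mult eval_nat_numeral

lemma symplectic_rep_Hom: "symplectic_rep \<in> HomGamma2 Sp4"
proof -
  have "symplectic_rep $ i \<in> Sp4" for i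
    using exhaust_5[of i]
    by (elim disjE) (simp_all add: Sp4_def J4_eq_mat4 mat4_transpose symplectic_rep_simps)
  moreover have "gamma2_rel symplectic_rep"
    unfolding gamma2_rel_def by (simp add: symplectic_rep_simps)
  ultimately show ?thesis
    by (simp add: HomGamma2_def)
qed

lemma symplectic_rep_chain_sq: "chain_sq symplectic_rep \<noteq> mat 1"
proof -
  have "chain_sq symplectic_rep = mat4 [[-1,-1,0,0], [1,0,0,0], [0,0,0,-1], [0,0,1,-1]]"
    by (simp add: chain_sq_def symplectic_rep_simps)
  then have "chain_sq symplectic_rep $ 0 $ 0 = -1"
    by (simp add: mat4_def Rep_bit0_simps)
  then show ?thesis
    by (auto simp: mat_def)
qed

theorem mainTheorem12:
  shows "\<exists>\<rho>\<in>HomGamma2 Sp4. \<forall>\<sigma>\<in>HomGamma2 U2. \<not> path_component (HomGamma2 Sp4) \<sigma> \<rho>"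
proof (intro bexI[OF _ symplectic_rep_Hom] ballI notI)
  fix \<sigma>
  assume \<sigma>: "\<sigma> \<in> HomGamma2 U2" and path: "path_component (HomGamma2 Sp4) \<sigma> symplectic_rep"
  have "chain_det \<rho> \<in> {0, 81}" if "\<rho> \<in> HomGamma2 Sp4" for \<rho>
    using that chain_det_cases chain_det_if_chain_sq_eq_1 by (auto simp: HomGamma2_def)
  then have "finite (chain_det ` HomGamma2 Sp4)"
    by (meson finite.emptyI finite.insertI finite_subset image_subset_iff)
  then have "chain_det \<sigma> = chain_det symplectic_rep"
    using path by (rule path_component_finite_range_eq[OF continuous_on_chain_det])
  moreover have "chain_det \<sigma> = 81"
    using U2_rep_chain_sq[OF \<sigma>] by (rule chain_det_if_chain_sq_eq_1)
  moreover have "chain_det symplectic_rep = 0"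
    using chain_det_cases symplectic_rep_Hom symplectic_rep_chain_sq by (auto simp: HomGamma2_def)
  ultimately show False
    by simp
qed

end
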